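(* Let $d\ge 1$, let $\Omega=\operatorname{diag}(\omega_j)_{j=1}^d\in\mathbb{R}^{d\times d}$ with $\omega_j> 0$ for all $j$, let $\omega=\min_j\omega_j$, and let $A\in\mathbb{C}^{d\times d}$ be self-adjoint. Let $0<h\le 1$ and let $\psi_1,\phi\colon\mathbb{R}\to\mathbb{R}$ be even functions such that $\psi_1(\xi)=\operatorname{sinc}(\xi)\phi(\xi)$ for all $\xi\in\mathbb{R}$ and, for constants $c_0,c_1\ge 0$, \[ |\psi_1(\xi)|\le c_0,\qquad |\phi(\xi)|\le c_0,\qquad |\phi(\xi)-1|\le c_1|\xi|\qquad\text{for all }\xi\in\mathbb{R}. \] Assume $\omega\ge \tfrac12 c_0^2\|A\|+1$. Set $\Psi_1=\psi_1(h\Omega)$, $\Phi=\phi(h\Omega)$. For given $q_0,\dot q_0\in\mathbb{C}^d$, define $(q_n,\dot q_n)_{n\ge 0}$ recursively by \begin{align*} q_{n+1} &= \cos(h\Omega) q_n + h\operatorname{sinc}(h\Omega) \dot{q}_n - \tfrac12 h^2 \operatorname{sinc}(h\Omega) \Psi_1 A\Phi q_n,\\ \dot{q}_{n+1} &= -\Omega \sin(h\Omega) q_n + \cos(h\Omega) \dot{q}_n - \tfrac12 h \big( \cos(h\Omega) \Psi_1 A\Phi q_n + \Psi_1 A\Phi q_{n+1}\big), \end{align*} and let $H(q,\dot q)=\tfrac12 \|\Omega q\|^2 + \tfrac12 \|\dot{q}\|^2 + \tfrac12 q^*Aq$. Then \[ \big|H(q_n,\dot{q}_n) - H(q_0,\dot{q}_0)\big|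 \le C \min\big(h,\omega^{-1}\big) + C h^2 \qquad\text{for all } n\in\mathbb{N}, \] with a constant $C$ depending only on $c_0$, $c_1$, $\|A\|$, $\|\Omega q_0\|$ and $\|\dot{q}_0\|$.
   Context: $\|\cdot\|$ is the Euclidean norm on $\mathbb{C}^d$ and, for matrices, the induced operator norm; ${}^*$ denotes conjugate transpose. $\operatorname{sinc}(\xi)=\sin(\xi)/\xi$ for $\xi\ne0$ and $\operatorname{sinc}(0)=1$. For a function $f\colon\mathbb{R}\to\mathbb{R}$, $f(h\Omega)$ denotes the diagonal matrix $\operatorname{diag}(f(h\omega_j))_{j=1}^d$. *)

theory Defs
  imports "HOL-Analysis.Analysis"
begin

text \<open>Vectors in C^d are represented as functions nat => complex (only indices < d matter),
  d x d matrices as nat => nat => complex, and the diagonal matrix Omega by its diagonal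
  w :: nat => real.\<close>

definition sinc :: "real \<Rightarrow> real" where
  "sinc x = (if x = 0 then 1 else sin x / x)"

definition vnorm :: "nat \<Rightarrow> (nat \<Rightarrow> complex) \<Rightarrow> real" where
  "vnorm d v = sqrt (\<Sum>j<d. (cmod (v j))\<^sup>2)"

definition matvec :: "nat \<Rightarrow> (nat \<Rightarrow> nat \<Rightarrow> complex) \<Rightarrow> (nat \<Rightarrow> complex) \<Rightarrow> (nat \<Rightarrow> complex)" where
  "matvec d A v = (\<lambda>i. \<Sum>j<d. A i j * v j)"

definition opnorm :: "nat \<Rightarrow> (nat \<Rightarrow> nat \<Rightarrow> complex) \<Rightarrow> real" where
  "opnorm d A = Sup {vnorm d (matvec d A v) | v. vnorm d v \<le> 1}"

definition selfadjoint :: "nat \<Rightarrow> (nat \<Rightarrow> nat \<Rightarrow> complex) \<Rightarrow> bool" where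
  "selfadjoint d A \<longleftrightarrow> (\<forall>i<d. \<forall>j<d. A i j = cnj (A j i))"

definition omin :: "nat \<Rightarrow> (nat \<Rightarrow> real) \<Rightarrow> real" where
  "omin d w = Min (w ` {..<d})"

definition Omv :: "(nat \<Rightarrow> real) \<Rightarrow> (nat \<Rightarrow> complex) \<Rightarrow> (nat \<Rightarrow> complex)" where
  "Omv w q = (\<lambda>j. complex_of_real (w j) * q j)"

text \<open>H(q, qdot) = 1/2 |Omega q|^2 + 1/2 |qdot|^2 + 1/2 q^* A q
  (q^* A q is real for self-adjoint A; we take its real part).\<close>
definition Ham :: "nat \<Rightarrow> (nat \<Rightarrow> real) \<Rightarrow> (nat \<Rightarrow> nat \<Rightarrow> complex) \<Rightarrow> (nat \<Rightarrow> complex) \<Rightarrow> (nat \<Rightarrow> complex) \<Rightarrow> real" where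
  "Ham d w A q qd = (vnorm d (Omv w q))\<^sup>2 / 2 + (vnorm d qd)\<^sup>2 / 2
      + Re (\<Sum>i<d. cnj (q i) * matvec d A q i) / 2"

definition PAP :: "nat \<Rightarrow> (nat \<Rightarrow> real) \<Rightarrow> (nat \<Rightarrow> nat \<Rightarrow> complex) \<Rightarrow> real \<Rightarrow> (real \<Rightarrow> real) \<Rightarrow> (real \<Rightarrow> real)
    \<Rightarrow> (nat \<Rightarrow> complex) \<Rightarrow> (nat \<Rightarrow> complex)" where
  "PAP d w A h psi1 phi q = (\<lambda>i. complex_of_real (psi1 (h * w i)) *
      (\<Sum>j<d. A i j * (complex_of_real (phi (h * w j)) * q j)))"

definition step :: "nat \<Rightarrow> (nat \<Rightarrow> real) \<Rightarrow> (nat \<Rightarrow> nat \<Rightarrow> complex) \<Rightarrow> real \<Rightarrow> (real \<Rightarrow> real) \<Rightarrow> (real \<Rightarrow> real)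
    \<Rightarrow> (nat \<Rightarrow> complex) \<times> (nat \<Rightarrow> complex) \<Rightarrow> (nat \<Rightarrow> complex) \<times> (nat \<Rightarrow> complex)" where
  "step d w A h psi1 phi qq =
    (let q = fst qq; qd = snd qq;
         g = PAP d w A h psi1 phi q;
         q' = (\<lambda>i. complex_of_real (cos (h * w i)) * q i
                  + complex_of_real (h * sinc (h * w i)) * qd i
                  - complex_of_real (h\<^sup>2 / 2 * sinc (h * w i)) * g i);
         g' = PAP d w A h psi1 phi q';
         qd' = (\<lambda>i. - complex_of_real (w i * sin (h * w i)) * q i
                  + complex_of_real (cos (h * w i)) * qd i
                  - complex_of_real (h / 2) * (complex_of_real (cos (h * w i)) * g i + g' i))
     in (q', qd'))"

primrec traj :: "nat \<Rightarrow> (nat \<Rightarrow> real) \<Rightarrow> (nat \<Rightarrow> nat \<Rightarrow> complex) \<Rightarrow> real \<Rightarrow> (real \<Rightarrow> real) \<Rightarrow> (real \<Rightarrow> real)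
    \<Rightarrow> (nat \<Rightarrow> complex) \<Rightarrow> (nat \<Rightarrow> complex) \<Rightarrow> nat \<Rightarrow> (nat \<Rightarrow> complex) \<times> (nat \<Rightarrow> complex)" where
  "traj d w A h psi1 phi q0 qd0 0 = (q0, qd0)"
| "traj d w A h psi1 phi q0 qd0 (Suc n) = step d w A h psi1 phi (traj d w A h psi1 phi q0 qd0 n)"

end

theory Submission
  imports Defs
begin

text \<open>Write \<open>M = \<Phi> A \<Phi>\<close>, so that \<open>\<Psi>\<^sub>1 A \<Phi> = sinc(h\<Omega>) M\<close>, and let
  \<open>r = p - (h/2) \<Psi>\<^sub>1 A \<Phi> q\<close> be the half-step velocity. In the variables \<open>(\<Omega>q, r)\<close> one step of
  the scheme is the rotation by \<open>h\<Omega>\<close> followed by the kick \<open>r \<mapsto> r - h sinc(h\<Omega>) M q'\<close>; since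
  \<open>M\<close> is self-adjoint, the modified energy \<open>I(q, p) = \<parallel>r\<parallel>\<^sup>2 + \<parallel>\<Omega>q\<parallel>\<^sup>2 + Re \<langle>q', M q\<rangle>\<close>, with
  \<open>q'\<close> the next position, is then exactly conserved. The hypothesis \<open>\<omega> \<ge> c\<^sub>0\<^sup>2\<parallel>A\<parallel>/2 + 1\<close>
  makes the coupling term at most half of the rest, so \<open>I\<close> controls \<open>\<parallel>\<Omega>q\<^sub>n\<parallel>\<^sup>2\<close> uniformly in \<open>n\<close>.
  Finally \<open>\<bar>2H - I\<bar> = O(\<mu> + h\<^sup>2) \<parallel>\<Omega>q\<parallel>\<^sup>2\<close> with \<open>\<mu> = (1 + c\<^sub>0 + c\<^sub>1) min(h, 1/\<omega>)\<close>, because the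
  filter errors \<open>1 - \<phi>(\<xi>)\<close> and \<open>1 - \<phi>(\<xi>) cos \<xi>\<close> at \<open>\<xi> = h\<omega>\<^sub>j\<close> are bounded both by
  \<open>(c\<^sub>0 + c\<^sub>1) h\<omega>\<^sub>j\<close> and by \<open>1 + c\<^sub>0\<close>.\<close>

section \<open>Vectors and matrices in coordinates\<close>

definition cinner :: "nat \<Rightarrow> (nat \<Rightarrow> complex) \<Rightarrow> (nat \<Rightarrow> complex) \<Rightarrow> complex" where
  "cinner d x y = (\<Sum>j<d. cnj (x j) * y j)"

definition diag :: "(nat \<Rightarrow> real) \<Rightarrow> (nat \<Rightarrow> complex) \<Rightarrow> (nat \<Rightarrow> complex)" where
  "diag f x = (\<lambda>j. complex_of_real (f j) * x j)"

lemma vnorm_eq_L2_set: "vnorm d x = L2_set (\<lambda>j. cmod (x j)) {..<d}"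
  unfolding vnorm_def L2_set_def by simp

lemma vnorm_nonneg [simp]: "0 \<le> vnorm d x"
  unfolding vnorm_eq_L2_set by simp

lemma power2_vnorm: "(vnorm d x)\<^sup>2 = (\<Sum>j<d. (cmod (x j))\<^sup>2)"
  unfolding vnorm_def by (simp add: sum_nonneg)

lemma norm_cinner_le: "cmod (cinner d x y) \<le> vnorm d x * vnorm d y"
proof -
  have "cmod (cinner d x y) \<le> (\<Sum>j<d. \<bar>cmod (x j)\<bar> * \<bar>cmod (y j)\<bar>)"
    unfolding cinner_def using norm_sum[of "\<lambda>j. cnj (x j) * y j"] by (simp add: norm_mult)
  also have "\<dots> \<le> vnorm d x * vnorm d y"
    unfolding vnorm_eq_L2_set by (rule L2_set_mult_ineq)
  finally show ?thesis .
qed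

lemma vnorm_le_pointwise:
  assumes "0 \<le> k" and "\<And>j. j < d \<Longrightarrow> cmod (x j) \<le> k * cmod (y j)"
  shows "vnorm d x \<le> k * vnorm d y"
  unfolding vnorm_eq_L2_set L2_set_right_distrib[OF assms(1)]
  by (rule L2_set_mono) (use assms in auto)

lemma vnorm_diag_le:
  assumes "0 \<le> k" and "\<And>j. j < d \<Longrightarrow> \<bar>f j\<bar> \<le> k"
  shows "vnorm d (diag f x) \<le> k * vnorm d x"
  using assms by (intro vnorm_le_pointwise) (auto simp: diag_def norm_mult intro: mult_right_mono)

lemma vnorm_diag_const: "vnorm d (diag (\<lambda>_. c) x) = \<bar>c\<bar> * vnorm d x"
  unfolding vnorm_eq_L2_set diag_def by (simp add: norm_mult L2_set_right_distrib)

lemma vnorm_add_le: "vnorm d (\<lambda>j. x j + y j) \<le> vnorm d x + vnorm d y"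
proof -
  have "vnorm d (\<lambda>j. x j + y j) \<le> L2_set (\<lambda>j. cmod (x j) + cmod (y j)) {..<d}"
    unfolding vnorm_eq_L2_set by (rule L2_set_mono) (auto simp: norm_triangle_ineq)
  also have "\<dots> \<le> vnorm d x + vnorm d y"
    unfolding vnorm_eq_L2_set by (rule L2_set_triangle_ineq)
  finally show ?thesis .
qed

lemma vnorm_diff_le: "vnorm d (\<lambda>j. x j - y j) \<le> vnorm d x + vnorm d y"
  using vnorm_add_le[of d x "\<lambda>j. - y j"] by (simp add: vnorm_def)

lemma vnorm_eq_0_imp: "vnorm d x = 0 \<Longrightarrow> j < d \<Longrightarrow> x j = 0"
  unfolding vnorm_eq_L2_set by (simp add: L2_set_eq_0_iff)

lemma cinner_diff_left: "cinner d (\<lambda>j. x j - y j) z = cinner d x z - cinner d y z"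
  unfolding cinner_def by (simp add: sum_subtractf algebra_simps)

lemma cinner_diff_right: "cinner d x (\<lambda>j. y j - z j) = cinner d x y - cinner d x z"
  unfolding cinner_def by (simp add: sum_subtractf algebra_simps)

lemma diag_diag: "diag f (diag g x) = diag (\<lambda>j. f j * g j) x"
  by (simp add: diag_def fun_eq_iff mult.assoc)

lemma cinner_diag_right: "cinner d x (diag f y) = cinner d (diag f x) y"
  unfolding cinner_def diag_def by (simp add: mult_ac)

lemma cinner_matvec_selfadjoint:
  assumes "selfadjoint d A"
  shows "cinner d x (matvec d A y) = cnj (cinner d y (matvec d A x))"
proof -
  have "cinner d x (matvec d A y) = (\<Sum>i<d. \<Sum>j<d. cnj (x i) * A i j * y j)"
    by (simp add: cinner_def matvec_def sum_distrib_left mult.assoc)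
  also have "\<dots> = (\<Sum>j<d. \<Sum>i<d. cnj (x i) * A i j * y j)"
    by (rule sum.swap)
  also have "\<dots> = (\<Sum>j<d. \<Sum>i<d. cnj (cnj (y j) * A j i * x i))"
  proof (intro sum.cong refl)
    fix i j assume "i \<in> {..<d}" "j \<in> {..<d}"
    then have "A i j = cnj (A j i)" using assms unfolding selfadjoint_def by blast
    then show "cnj (x i) * A i j * y j = cnj (cnj (y j) * A j i * x i)" by (simp add: mult_ac)
  qed
  also have "\<dots> = cnj (cinner d y (matvec d A x))"
    by (simp add: cinner_def matvec_def sum_distrib_left mult.assoc)
  finally show ?thesis .
qed

lemma matvec_diff: "matvec d A (\<lambda>j. x j - y j) = (\<lambda>i. matvec d A x i - matvec d A y i)"
  unfolding matvec_def by (simp add: sum_subtractf algebra_simps)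

lemma matvec_diag_const: "matvec d A (diag (\<lambda>_. c) x) = diag (\<lambda>_. c) (matvec d A x)"
  unfolding matvec_def diag_def by (simp add: sum_distrib_left mult_ac)

lemma vnorm_matvec_le_entries:
  assumes "vnorm d x \<le> 1"
  shows "vnorm d (matvec d A x) \<le> (\<Sum>i<d. \<Sum>j<d. cmod (A i j))"
proof -
  have entry: "cmod (matvec d A x i) \<le> (\<Sum>j<d. cmod (A i j))" for i
  proof -
    have "cmod (matvec d A x i) \<le> (\<Sum>j<d. cmod (A i j) * cmod (x j))"
      unfolding matvec_def using norm_sum[of "\<lambda>j. A i j * x j"] by (simp add: norm_mult)
    also have "\<dots> \<le> (\<Sum>j<d. cmod (A i j))"
    proof (rule sum_mono)
      fix j assume "j \<in> {..<d}"
      then have "cmod (x j) \<le> vnorm d x"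
        unfolding vnorm_eq_L2_set by (intro member_le_L2_set) auto
      then show "cmod (A i j) * cmod (x j) \<le> cmod (A i j)"
        using assms by (intro mult_left_le) auto
    qed
    finally show ?thesis .
  qed
  have "vnorm d (matvec d A x) \<le> (\<Sum>i<d. \<bar>cmod (matvec d A x i)\<bar>)"
    unfolding vnorm_eq_L2_set by (rule L2_set_le_sum_abs)
  also have "\<dots> \<le> (\<Sum>i<d. \<Sum>j<d. cmod (A i j))"
    using entry by (intro sum_mono) simp
  finally show ?thesis .
qed

lemma bdd_above_opnorm: "bdd_above {vnorm d (matvec d A v) | v. vnorm d v \<le> 1}"
  using vnorm_matvec_le_entries by (auto intro!: bdd_aboveI)

lemma vnorm_matvec_le_opnorm: "vnorm d x \<le> 1 \<Longrightarrow> vnorm d (matvec d A x) \<le> opnorm d A"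
  unfolding opnorm_def by (rule cSup_upper[OF _ bdd_above_opnorm]) auto

lemma opnorm_nonneg: "0 \<le> opnorm d A"
  using vnorm_matvec_le_opnorm[of d "\<lambda>_. 0" A] by (simp add: vnorm_def matvec_def)

lemma vnorm_matvec_le: "vnorm d (matvec d A x) \<le> opnorm d A * vnorm d x"
proof (cases "vnorm d x = 0")
  case True
  then have "matvec d A x = (\<lambda>_. 0)"
    unfolding matvec_def using vnorm_eq_0_imp[OF True] by (auto intro!: sum.neutral)
  then show ?thesis using True opnorm_nonneg[of d A] by (simp add: vnorm_def)
next
  case False
  define t where "t = vnorm d x"
  have "t > 0" using False unfolding t_def by (simp add: order_neq_le_trans)
  have "vnorm d (matvec d A (diag (\<lambda>_. 1 / t) x)) \<le> opnorm d A"
    using \<open>t > 0\<close> by (intro vnorm_matvec_le_opnorm) (simp add: vnorm_diag_const t_def)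
  then have "vnorm d (matvec d A x) / t \<le> opnorm d A"
    using \<open>t > 0\<close> by (simp add: matvec_diag_const vnorm_diag_const)
  then show ?thesis using \<open>t > 0\<close> unfolding t_def by (simp add: divide_le_eq mult.commute)
qed

section \<open>One-dimensional estimates and identities\<close>

lemma mult_sinc: "x * sinc x = sin x"
  by (simp add: sinc_def)

lemma abs_sinc_le_one: "\<bar>sinc x\<bar> \<le> 1"
  unfolding sinc_def using abs_sin_x_le_abs_x[of x]
  by (auto simp: abs_divide divide_le_eq)

lemma abs_mult_sinc_le:
  assumes "w > 0"
  shows "\<bar>h * sinc (h * w)\<bar> \<le> 1 / w"
proof -
  have "h * sinc (h * w) = sin (h * w) / w"
    using mult_sinc[of "h * w"] assms by (simp add: field_simps)
  then show ?thesis using assms by (simp add: abs_divide divide_right_mono)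
qed

lemma one_minus_cos_le_abs: "1 - cos (x::real) \<le> \<bar>x\<bar>"
proof -
  have "1 - cos x = 2 * \<bar>sin (x/2)\<bar> * \<bar>sin (x/2)\<bar>"
    using cos_double_sin[of "x/2"] by (simp add: power2_eq_square abs_mult_self_eq)
  also have "\<dots> \<le> 2 * \<bar>x/2\<bar> * 1"
    using abs_sin_x_le_abs_x[of "x/2"] by (intro mult_mono) auto
  finally show ?thesis by simp
qed

text \<open>In the variables \<open>(w q, r)\<close> the map \<open>(q, r) \<mapsto> (q', r' + h S m)\<close> is the rotation by the
  angle with cosine \<open>c\<close> and sine \<open>s\<close>, and \<open>q = c q' - h S (r' + h S m)\<close>.\<close>
lemma rotation_kick_identity:
  fixes q r m :: complex and c s S w h :: real
  assumes "h * S * w = s" and "c\<^sup>2 + s\<^sup>2 = 1"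
  defines "q' \<equiv> of_real c * q + of_real (h * S) * r"
    and "r' \<equiv> - of_real (w * s) * q + of_real c * r - of_real (h * S) * m"
  shows "(cmod r')\<^sup>2 + (cmod (of_real w * q'))\<^sup>2 + Re (cnj (of_real c * q' + of_real (h * S) * r') * m)
       = (cmod r)\<^sup>2 + (cmod (of_real w * q))\<^sup>2 + Re (cnj q * m)"
proof -
  have s: "s = h * S * w" using assms(1) by simp
  show ?thesis
    unfolding q'_def r'_def cmod_power2 s
    apply (simp add: power2_eq_square)
    using assms(2) unfolding s by algebra
qed

lemma half_step_energy_identity:
  fixes q p m :: complex and c S h :: real
  shows "(cmod p)\<^sup>2 - (cmod (p - of_real (h/2) * (of_real S * m)))\<^sup>2
     - Re (cnj (of_real c * q + of_real (h * S) * (p - of_real (h/2) * (of_real S * m))) * m)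
     = - Re (cnj (of_real c * q) * m) + h\<^sup>2/4 * (cmod (of_real S * m))\<^sup>2"
  unfolding cmod_power2 by (simp add: power2_eq_square algebra_simps)

section \<open>The filtered scheme\<close>

definition energy_error_const :: "real \<Rightarrow> real \<Rightarrow> real \<Rightarrow> real \<Rightarrow> real \<Rightarrow> real" where
  "energy_error_const c0 c1 a x p = 16 * (a * (1 + c0) * (1 + c0 + c1) + c0 ^ 4 * a\<^sup>2 / 4) * (p + x)\<^sup>2"

locale filtered_scheme =
  fixes d :: nat and w :: "nat \<Rightarrow> real" and A :: "nat \<Rightarrow> nat \<Rightarrow> complex" and h :: real
    and psi1 phi :: "real \<Rightarrow> real" and c0 c1 :: real
  assumes w_pos: "\<And>j. j < d \<Longrightarrow> 0 < w j"
    and selfadjoint_A: "selfadjoint d A"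
    and h_pos: "0 < h" and h_le_1: "h \<le> 1"
    and psi1_eq: "\<And>x. psi1 x = sinc x * phi x"
    and c0_nonneg: "0 \<le> c0" and c1_nonneg: "0 \<le> c1"
    and abs_phi_le: "\<And>x. \<bar>phi x\<bar> \<le> c0"
    and abs_phi_minus_one_le: "\<And>x. \<bar>phi x - 1\<bar> \<le> c1 * \<bar>x\<bar>"
    and omin_ge: "c0\<^sup>2 * opnorm d A / 2 + 1 \<le> omin d w"
begin

abbreviation "\<omega> \<equiv> omin d w"
abbreviation "force \<equiv> PAP d w A h psi1 phi"
abbreviation "next_state \<equiv> step d w A h psi1 phi"

definition "alpha = c0\<^sup>2 * opnorm d A"

definition Phi :: "(nat \<Rightarrow> complex) \<Rightarrow> (nat \<Rightarrow> complex)" where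
  "Phi = diag (\<lambda>j. phi (h * w j))"

definition M :: "(nat \<Rightarrow> complex) \<Rightarrow> (nat \<Rightarrow> complex)" where
  "M q = Phi (matvec d A (Phi q))"

definition half_vel :: "(nat \<Rightarrow> complex) \<Rightarrow> (nat \<Rightarrow> complex) \<Rightarrow> (nat \<Rightarrow> complex)" where
  "half_vel q p = (\<lambda>j. p j - of_real (h / 2) * force q j)"

definition mod_energy :: "(nat \<Rightarrow> complex) \<Rightarrow> (nat \<Rightarrow> complex) \<Rightarrow> real" where
  "mod_energy q p = (vnorm d (half_vel q p))\<^sup>2 + (vnorm d (Omv w q))\<^sup>2
     + Re (cinner d (fst (next_state (q, p))) (M q))"

lemma force_eq: "force q = diag (\<lambda>j. sinc (h * w j)) (M q)"
  unfolding PAP_def M_def Phi_def diag_def matvec_def psi1_eq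
  by (simp add: fun_eq_iff sum_distrib_left mult_ac)

lemma fst_next_state:
  "fst (next_state (q, p)) = (\<lambda>j. of_real (cos (h * w j)) * q j + of_real (h * sinc (h * w j)) * half_vel q p j)"
  by (simp add: step_def Let_def half_vel_def fun_eq_iff algebra_simps power2_eq_square)

lemma half_vel_next_state:
  "half_vel (fst (next_state (q, p))) (snd (next_state (q, p))) =
     (\<lambda>j. - of_real (w j * sin (h * w j)) * q j + of_real (cos (h * w j)) * half_vel q p j
          - of_real (h * sinc (h * w j)) * M (fst (next_state (q, p))) j)"
proof -
  have "force (fst (next_state (q, p))) j = of_real (sinc (h * w j)) * M (fst (next_state (q, p))) j" for j
    by (simp add: force_eq diag_def)
  then show ?thesis
    by (simp add: step_def Let_def half_vel_def fun_eq_iff algebra_simps)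
qed

lemma cinner_M_commute: "cinner d x (M y) = cnj (cinner d y (M x))"
proof -
  have "cinner d x (M y) = cinner d (Phi x) (matvec d A (Phi y))"
    by (simp add: M_def Phi_def cinner_diag_right)
  also have "\<dots> = cnj (cinner d (Phi y) (matvec d A (Phi x)))"
    by (rule cinner_matvec_selfadjoint[OF selfadjoint_A])
  also have "\<dots> = cnj (cinner d y (M x))"
    by (simp add: M_def Phi_def cinner_diag_right)
  finally show ?thesis .
qed

lemma mod_energy_next_state:
  "mod_energy (fst (next_state (q, p))) (snd (next_state (q, p))) = mod_energy q p"
proof -
  define q' where "q' = fst (next_state (q, p))"
  define p' where "p' = snd (next_state (q, p))"
  define q'' where "q'' = fst (next_state (q', p'))"
  have coord: "(cmod (half_vel q' p' j))\<^sup>2 + (cmod (Omv w q' j))\<^sup>2 + Re (cnj (q'' j) * M q' j)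
      = (cmod (half_vel q p j))\<^sup>2 + (cmod (Omv w q j))\<^sup>2 + Re (cnj (q j) * M q' j)" for j
  proof -
    have hs: "h * sinc (h * w j) * w j = sin (h * w j)"
      using mult_sinc[of "h * w j"] by (simp add: mult_ac)
    have q': "q' j = of_real (cos (h * w j)) * q j + of_real (h * sinc (h * w j)) * half_vel q p j"
      unfolding q'_def fst_next_state ..
    have r': "half_vel q' p' j = - of_real (w j * sin (h * w j)) * q j
        + of_real (cos (h * w j)) * half_vel q p j - of_real (h * sinc (h * w j)) * M q' j"
      unfolding q'_def p'_def half_vel_next_state ..
    have q'': "q'' j = of_real (cos (h * w j)) * q' j + of_real (h * sinc (h * w j)) * half_vel q' p' j"
      unfolding q''_def fst_next_state ..
    show ?thesis
      unfolding Omv_def q'' r' q' by (rule rotation_kick_identity[OF hs sin_cos_squared_add2])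
  qed
  have "mod_energy q' p' = (\<Sum>j<d. (cmod (half_vel q' p' j))\<^sup>2 + (cmod (Omv w q' j))\<^sup>2 + Re (cnj (q'' j) * M q' j))"
    unfolding mod_energy_def q''_def power2_vnorm cinner_def p'_def q'_def by (simp add: sum.distrib)
  also have "\<dots> = (vnorm d (half_vel q p))\<^sup>2 + (vnorm d (Omv w q))\<^sup>2 + Re (cinner d q (M q'))"
    unfolding coord power2_vnorm cinner_def by (simp add: sum.distrib)
  also have "Re (cinner d q (M q')) = Re (cinner d q' (M q))"
    by (subst cinner_M_commute) simp
  finally show ?thesis unfolding mod_energy_def q'_def p'_def by simp
qed

lemma mod_energy_traj:
  "mod_energy (fst (traj d w A h psi1 phi q0 qd0 n)) (snd (traj d w A h psi1 phi q0 qd0 n)) = mod_energy q0 qd0"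
proof (induction n)
  case (Suc n)
  obtain q p where "traj d w A h psi1 phi q0 qd0 n = (q, p)" by fastforce
  with Suc show ?case using mod_energy_next_state[of q p] by simp
qed simp

lemma alpha_nonneg: "0 \<le> alpha"
  unfolding alpha_def using opnorm_nonneg by simp

lemma omin_le: "j < d \<Longrightarrow> \<omega> \<le> w j"
  unfolding omin_def by (rule Min_le) auto

lemma alpha_le: "alpha \<le> 2 * (\<omega> - 1)"
  using omin_ge unfolding alpha_def by simp

lemma one_le_omin: "1 \<le> \<omega>"
  using alpha_le alpha_nonneg by simp

lemma alpha_div_omin_le: "alpha / \<omega> \<le> 2"
  using alpha_le one_le_omin by (simp add: divide_le_eq)

lemma alpha_div_omin_squared_le: "alpha / \<omega>\<^sup>2 \<le> 1 / 2"
proof -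
  have "2 * (\<omega> - 1) \<le> \<omega>\<^sup>2 / 2"
    using zero_le_power2[of "\<omega> - 2"] by (simp add: power2_eq_square algebra_simps)
  then show ?thesis using alpha_le one_le_omin by (simp add: divide_le_eq)
qed

lemma vnorm_Phi_le: "vnorm d (Phi q) \<le> c0 * vnorm d q"
  unfolding Phi_def by (rule vnorm_diag_le[OF c0_nonneg abs_phi_le])

lemma vnorm_M_le: "vnorm d (M q) \<le> alpha * vnorm d q"
proof -
  have "vnorm d (M q) \<le> c0 * vnorm d (matvec d A (Phi q))"
    unfolding M_def by (rule vnorm_Phi_le)
  also have "\<dots> \<le> c0 * (opnorm d A * vnorm d (Phi q))"
    by (intro mult_left_mono vnorm_matvec_le c0_nonneg)
  also have "\<dots> \<le> c0 * (opnorm d A * (c0 * vnorm d q))"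
    by (intro mult_left_mono vnorm_Phi_le c0_nonneg opnorm_nonneg)
  finally show ?thesis unfolding alpha_def by (simp add: power2_eq_square mult_ac)
qed

lemma vnorm_le_vnorm_Omv_div: "vnorm d q \<le> vnorm d (Omv w q) / \<omega>"
proof -
  have "vnorm d q \<le> (1 / \<omega>) * vnorm d (Omv w q)"
  proof (rule vnorm_le_pointwise)
    fix j assume j: "j < d"
    have "1 \<le> w j / \<omega>" using omin_le[OF j] one_le_omin by (simp add: le_divide_eq)
    then have "1 * cmod (q j) \<le> (w j / \<omega>) * cmod (q j)" by (rule mult_right_mono) simp
    then show "cmod (q j) \<le> 1 / \<omega> * cmod (Omv w q j)"
      unfolding Omv_def using w_pos[OF j] by (simp add: norm_mult)
  qed (use one_le_omin in simp)
  then show ?thesis by simp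
qed

lemma vnorm_le_vnorm_Omv: "vnorm d q \<le> vnorm d (Omv w q)"
proof -
  have "vnorm d (Omv w q) / \<omega> \<le> vnorm d (Omv w q)"
    using mult_left_mono[OF one_le_omin vnorm_nonneg[of d "Omv w q"]] one_le_omin
    by (simp add: divide_le_eq)
  then show ?thesis using vnorm_le_vnorm_Omv_div[of q] by linarith
qed

lemma vnorm_next_state_le:
  "vnorm d (fst (next_state (q, p))) \<le> (vnorm d (Omv w q) + vnorm d (half_vel q p)) / \<omega>"
proof -
  have "vnorm d (diag (\<lambda>j. cos (h * w j)) q) \<le> 1 * vnorm d q"
    by (rule vnorm_diag_le) auto
  moreover have "vnorm d (diag (\<lambda>j. h * sinc (h * w j)) (half_vel q p)) \<le> (1 / \<omega>) * vnorm d (half_vel q p)"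
  proof (rule vnorm_diag_le)
    fix j assume j: "j < d"
    have "\<bar>h * sinc (h * w j)\<bar> \<le> 1 / w j" by (rule abs_mult_sinc_le[OF w_pos[OF j]])
    also have "\<dots> \<le> 1 / \<omega>" using omin_le[OF j] one_le_omin by (simp add: frac_le)
    finally show "\<bar>h * sinc (h * w j)\<bar> \<le> 1 / \<omega>" .
  qed (use one_le_omin in simp)
  moreover have "vnorm d (fst (next_state (q, p)))
      \<le> vnorm d (diag (\<lambda>j. cos (h * w j)) q) + vnorm d (diag (\<lambda>j. h * sinc (h * w j)) (half_vel q p))"
    unfolding fst_next_state using vnorm_add_le by (simp add: diag_def)
  ultimately show ?thesis
    using vnorm_le_vnorm_Omv_div[of q] by (simp add: add_divide_distrib)
qed

lemma coupling_term_le: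
  "\<bar>Re (cinner d (fst (next_state (q, p))) (M q))\<bar>
     \<le> (vnorm d (Omv w q) + vnorm d (half_vel q p)) * vnorm d (Omv w q) / 2"
proof -
  define X where "X = vnorm d (Omv w q)"
  define R where "R = vnorm d (half_vel q p)"
  have "\<bar>Re (cinner d (fst (next_state (q, p))) (M q))\<bar> \<le> vnorm d (fst (next_state (q, p))) * vnorm d (M q)"
    using abs_Re_le_cmod norm_cinner_le order_trans by blast
  also have "\<dots> \<le> ((X + R) / \<omega>) * (alpha * (X / \<omega>))"
  proof (rule mult_mono)
    show "vnorm d (M q) \<le> alpha * (X / \<omega>)"
      unfolding X_def using vnorm_M_le vnorm_le_vnorm_Omv_div alpha_nonneg
      by (rule order_trans[OF _ mult_left_mono])
    show "0 \<le> (X + R) / \<omega>"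
      unfolding X_def R_def using one_le_omin by simp
  qed (simp_all add: X_def R_def vnorm_next_state_le)
  also have "\<dots> = alpha / \<omega>\<^sup>2 * ((X + R) * X)"
    by (simp add: power2_eq_square)
  also have "\<dots> \<le> 1 / 2 * ((X + R) * X)"
    unfolding X_def R_def by (intro mult_right_mono alpha_div_omin_squared_le) simp
  finally show ?thesis unfolding X_def R_def by simp
qed

lemma mod_energy_bounds:
  "(vnorm d (Omv w q))\<^sup>2 / 4 \<le> mod_energy q p"
  "mod_energy q p \<le> 2 * ((vnorm d (half_vel q p))\<^sup>2 + (vnorm d (Omv w q))\<^sup>2)"
proof -
  define X where "X = vnorm d (Omv w q)"
  define R where "R = vnorm d (half_vel q p)"
  define c where "c = Re (cinner d (fst (next_state (q, p))) (M q))"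
  have E: "mod_energy q p = R\<^sup>2 + X\<^sup>2 + c"
    unfolding mod_energy_def X_def R_def c_def ..
  have c: "\<bar>c\<bar> \<le> (X + R) * X / 2"
    unfolding X_def R_def c_def by (rule coupling_term_le)
  have "R\<^sup>2 + X\<^sup>2 - (X + R) * X / 2 - X\<^sup>2 / 4 = (R - X / 4)\<^sup>2 + 3 / 16 * X\<^sup>2"
    by (simp add: power2_eq_square field_simps)
  then show "X\<^sup>2 / 4 \<le> mod_energy q p"
    using E c zero_le_power2[of "R - X / 4"] zero_le_power2[of X] by linarith
  have "2 * (R\<^sup>2 + X\<^sup>2) - (R\<^sup>2 + X\<^sup>2 + (X + R) * X / 2) = (R - X / 4)\<^sup>2 + 7 / 16 * X\<^sup>2"
    by (simp add: power2_eq_square field_simps)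
  then show "mod_energy q p \<le> 2 * (R\<^sup>2 + X\<^sup>2)"
    using E c zero_le_power2[of "R - X / 4"] zero_le_power2[of X] by linarith
qed

lemma vnorm_half_vel_le: "vnorm d (half_vel q p) \<le> vnorm d p + vnorm d (Omv w q)"
proof -
  have "vnorm d (half_vel q p) \<le> vnorm d p + vnorm d (diag (\<lambda>_. h / 2) (force q))"
    unfolding half_vel_def using vnorm_diff_le by (simp add: diag_def)
  also have "vnorm d (diag (\<lambda>_. h / 2) (force q)) \<le> (1 / 2) * (1 * vnorm d (M q))"
    unfolding force_eq vnorm_diag_const using h_pos h_le_1 abs_sinc_le_one
    by (intro mult_mono vnorm_diag_le) auto
  also have "vnorm d (M q) \<le> alpha * (vnorm d (Omv w q) / \<omega>)"
    using vnorm_M_le vnorm_le_vnorm_Omv_div alpha_nonneg by (rule order_trans[OF _ mult_left_mono])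
  also have "\<dots> = (alpha / \<omega>) * vnorm d (Omv w q)"
    by simp
  also have "\<dots> \<le> 2 * vnorm d (Omv w q)"
    by (intro mult_right_mono alpha_div_omin_le) simp
  finally show ?thesis by simp
qed

lemma vnorm_Omv_traj_le:
  "(vnorm d (Omv w (fst (traj d w A h psi1 phi q0 qd0 n))))\<^sup>2 \<le> 16 * (vnorm d qd0 + vnorm d (Omv w q0))\<^sup>2"
proof -
  define B where "B = (vnorm d qd0 + vnorm d (Omv w q0))\<^sup>2"
  have "(vnorm d (half_vel q0 qd0))\<^sup>2 \<le> B"
    unfolding B_def by (intro power_mono vnorm_half_vel_le) simp
  moreover have "(vnorm d (Omv w q0))\<^sup>2 \<le> B"
    unfolding B_def by (intro power_mono) auto
  ultimately have "mod_energy q0 qd0 \<le> 2 * (B + B)"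
    by (intro order_trans[OF mod_energy_bounds(2)] mult_left_mono add_mono) auto
  moreover have "(vnorm d (Omv w (fst (traj d w A h psi1 phi q0 qd0 n))))\<^sup>2 / 4 \<le> mod_energy q0 qd0"
    using mod_energy_bounds(1) mod_energy_traj by metis
  ultimately have "(vnorm d (Omv w (fst (traj d w A h psi1 phi q0 qd0 n))))\<^sup>2 / 4 \<le> 4 * B"
    by simp
  then show ?thesis unfolding B_def by simp
qed

definition "mu = (1 + c0 + c1) * min h (1 / \<omega>)"

lemma mu_nonneg: "0 \<le> mu"
  unfolding mu_def using c0_nonneg c1_nonneg h_pos one_le_omin by simp

lemma abs_le_mu_mult:
  assumes j: "j < d" and small: "\<bar>e\<bar> \<le> (c0 + c1) * (h * w j)" and bounded: "\<bar>e\<bar> \<le> 1 + c0"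
  shows "\<bar>e\<bar> \<le> mu * w j"
proof (cases "h \<le> 1 / \<omega>")
  case True
  have "(c0 + c1) * (h * w j) \<le> (1 + c0 + c1) * h * w j"
    using w_pos[OF j] h_pos by (simp add: mult_right_mono)
  then show ?thesis using True small unfolding mu_def by simp
next
  case False
  have "1 \<le> w j / \<omega>" using omin_le[OF j] one_le_omin by (simp add: le_divide_eq)
  then have "(1 + c0) * 1 \<le> (1 + c0 + c1) * (w j / \<omega>)"
    using c0_nonneg c1_nonneg by (intro mult_mono) auto
  then show ?thesis using False bounded unfolding mu_def by simp
qed

lemma filter_errors_le:
  assumes j: "j < d"
  shows "\<bar>1 - phi (h * w j)\<bar> \<le> mu * w j"
    and "\<bar>1 - phi (h * w j) * cos (h * w j)\<bar> \<le> mu * w j"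
proof -
  define x where "x = h * w j"
  have x: "0 \<le> x" unfolding x_def using h_pos w_pos[OF j] by simp
  have one: "\<bar>1 - phi x\<bar> \<le> c1 * x"
    using abs_phi_minus_one_le[of x] x by (simp add: abs_minus_commute)
  have cos: "\<bar>phi x * (1 - cos x)\<bar> \<le> c0 * x"
    unfolding abs_mult using abs_phi_le one_minus_cos_le_abs[of x] x c0_nonneg
    by (intro mult_mono) auto
  have phi_cos: "\<bar>phi x * cos x\<bar> \<le> c0"
    using abs_phi_le c0_nonneg mult_mono[of "\<bar>phi x\<bar>" c0 "\<bar>cos x\<bar>" 1] by (simp add: abs_mult)
  have "\<bar>1 - phi x\<bar> \<le> (c0 + c1) * x"
    using one x c0_nonneg by (simp add: distrib_right add_increasing)
  moreover have "\<bar>1 - phi x\<bar> \<le> 1 + c0"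
    using abs_triangle_ineq4[of 1 "phi x"] abs_phi_le[of x] by simp
  ultimately show "\<bar>1 - phi (h * w j)\<bar> \<le> mu * w j"
    unfolding x_def by (rule abs_le_mu_mult[OF j])
  have "1 - phi x * cos x = (1 - phi x) + phi x * (1 - cos x)"
    by (simp add: algebra_simps)
  then have "\<bar>1 - phi x * cos x\<bar> \<le> \<bar>1 - phi x\<bar> + \<bar>phi x * (1 - cos x)\<bar>"
    by (metis abs_triangle_ineq)
  then have "\<bar>1 - phi x * cos x\<bar> \<le> (c0 + c1) * x"
    using one cos by (simp add: distrib_right)
  moreover have "\<bar>1 - phi x * cos x\<bar> \<le> 1 + c0"
    using abs_triangle_ineq4[of 1 "phi x * cos x"] phi_cos by simp
  ultimately show "\<bar>1 - phi (h * w j) * cos (h * w j)\<bar> \<le> mu * w j"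
    unfolding x_def by (rule abs_le_mu_mult[OF j])
qed

lemma two_Ham_minus_mod_energy:
  "2 * Ham d w A q p - mod_energy q p
     = Re (cinner d q (matvec d A q)) - Re (cinner d (diag (\<lambda>j. cos (h * w j)) q) (M q))
       + h\<^sup>2 / 4 * (vnorm d (force q))\<^sup>2"
proof -
  have coord: "(cmod (p j))\<^sup>2 - (cmod (half_vel q p j))\<^sup>2 - Re (cnj (fst (next_state (q, p)) j) * M q j)
      = - Re (cnj (diag (\<lambda>j. cos (h * w j)) q j) * M q j) + h\<^sup>2 / 4 * (cmod (force q j))\<^sup>2" for j
    using half_step_energy_identity[of "p j" h "sinc (h * w j)" "M q j" "cos (h * w j)" "q j"]
    by (simp add: fst_next_state half_vel_def force_eq diag_def)
  have "(vnorm d p)\<^sup>2 - (vnorm d (half_vel q p))\<^sup>2 - Re (cinner d (fst (next_state (q, p))) (M q))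
      = (\<Sum>j<d. (cmod (p j))\<^sup>2 - (cmod (half_vel q p j))\<^sup>2 - Re (cnj (fst (next_state (q, p)) j) * M q j))"
    unfolding power2_vnorm cinner_def by (simp add: sum_subtractf Re_sum)
  also have "\<dots> = (\<Sum>j<d. - Re (cnj (diag (\<lambda>j. cos (h * w j)) q j) * M q j) + h\<^sup>2 / 4 * (cmod (force q j))\<^sup>2)"
    unfolding coord ..
  also have "\<dots> = - Re (cinner d (diag (\<lambda>j. cos (h * w j)) q) (M q)) + h\<^sup>2 / 4 * (vnorm d (force q))\<^sup>2"
    unfolding power2_vnorm cinner_def by (simp only: sum.distrib sum_distrib_left Re_sum sum_negf)
  finally show ?thesis
    unfolding Ham_def mod_energy_def cinner_def by simp
qed

lemma filter_coupling_error_le: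
  "\<bar>Re (cinner d q (matvec d A q)) - Re (cinner d (diag (\<lambda>j. cos (h * w j)) q) (M q))\<bar>
     \<le> opnorm d A * (1 + c0) * mu * (vnorm d (Omv w q))\<^sup>2"
proof -
  define X where "X = vnorm d (Omv w q)"
  define u where "u = diag (\<lambda>j. phi (h * w j) * cos (h * w j)) q"
  define v where "v = Phi q"
  have split: "cinner d q (matvec d A q) - cinner d (diag (\<lambda>j. cos (h * w j)) q) (M q)
      = cinner d (\<lambda>j. q j - u j) (matvec d A q) + cinner d u (matvec d A (\<lambda>j. q j - v j))"
    unfolding M_def Phi_def cinner_diag_right diag_diag u_def v_def
    by (simp add: cinner_diff_left cinner_diff_right matvec_diff mult.commute)
  have Omv_coord: "cmod (Omv w q j) = w j * cmod (q j)" if "j < d" for j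
    unfolding Omv_def using w_pos[OF that] by (simp add: norm_mult)
  have qu: "vnorm d (\<lambda>j. q j - u j) \<le> mu * X"
    unfolding X_def
  proof (rule vnorm_le_pointwise[OF mu_nonneg])
    fix j assume j: "j < d"
    have "q j - u j = of_real (1 - phi (h * w j) * cos (h * w j)) * q j"
      unfolding u_def diag_def by (simp add: algebra_simps)
    then have "cmod (q j - u j) = \<bar>1 - phi (h * w j) * cos (h * w j)\<bar> * cmod (q j)"
      by (simp only: norm_mult norm_of_real)
    also have "\<dots> \<le> mu * w j * cmod (q j)"
      by (intro mult_right_mono filter_errors_le(2)[OF j]) simp
    finally show "cmod (q j - u j) \<le> mu * cmod (Omv w q j)" by (simp add: Omv_coord[OF j] mult.assoc)
  qed
  have qv: "vnorm d (\<lambda>j. q j - v j) \<le> mu * X"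
    unfolding X_def
  proof (rule vnorm_le_pointwise[OF mu_nonneg])
    fix j assume j: "j < d"
    have "q j - v j = of_real (1 - phi (h * w j)) * q j"
      unfolding v_def Phi_def diag_def by (simp add: algebra_simps)
    then have "cmod (q j - v j) = \<bar>1 - phi (h * w j)\<bar> * cmod (q j)"
      by (simp only: norm_mult norm_of_real)
    also have "\<dots> \<le> mu * w j * cmod (q j)"
      by (intro mult_right_mono filter_errors_le(1)[OF j]) simp
    finally show "cmod (q j - v j) \<le> mu * cmod (Omv w q j)" by (simp add: Omv_coord[OF j] mult.assoc)
  qed
  have u: "vnorm d u \<le> c0 * X"
  proof -
    have "vnorm d u \<le> c0 * vnorm d q"
      unfolding u_def using c0_nonneg
    proof (rule vnorm_diag_le)
      fix j
      show "\<bar>phi (h * w j) * cos (h * w j)\<bar> \<le> c0"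
        using abs_phi_le c0_nonneg mult_mono[of "\<bar>phi (h * w j)\<bar>" c0 "\<bar>cos (h * w j)\<bar>" 1]
        by (simp add: abs_mult)
    qed
    also have "\<dots> \<le> c0 * X"
      unfolding X_def by (intro mult_left_mono vnorm_le_vnorm_Omv c0_nonneg)
    finally show ?thesis .
  qed
  have "cmod (cinner d (\<lambda>j. q j - u j) (matvec d A q)) \<le> (mu * X) * (opnorm d A * X)"
  proof (rule order_trans[OF norm_cinner_le mult_mono])
    show "vnorm d (matvec d A q) \<le> opnorm d A * X"
      unfolding X_def by (intro order_trans[OF vnorm_matvec_le] mult_left_mono vnorm_le_vnorm_Omv opnorm_nonneg)
  qed (use qu mu_nonneg X_def in auto)
  moreover have "cmod (cinner d u (matvec d A (\<lambda>j. q j - v j))) \<le> (c0 * X) * (opnorm d A * (mu * X))"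
  proof (rule order_trans[OF norm_cinner_le mult_mono])
    show "vnorm d (matvec d A (\<lambda>j. q j - v j)) \<le> opnorm d A * (mu * X)"
      by (intro order_trans[OF vnorm_matvec_le] mult_left_mono qv opnorm_nonneg)
  qed (use u c0_nonneg X_def in auto)
  ultimately have "cmod (cinner d (\<lambda>j. q j - u j) (matvec d A q)) + cmod (cinner d u (matvec d A (\<lambda>j. q j - v j)))
      \<le> opnorm d A * (1 + c0) * mu * X\<^sup>2"
    by (simp add: power2_eq_square algebra_simps)
  then have "cmod (cinner d q (matvec d A q) - cinner d (diag (\<lambda>j. cos (h * w j)) q) (M q))
      \<le> opnorm d A * (1 + c0) * mu * X\<^sup>2"
    unfolding split using norm_triangle_ineq order_trans by blast
  then show ?thesis
    unfolding X_def
    using abs_Re_le_cmod[of "cinner d q (matvec d A q) - cinner d (diag (\<lambda>j. cos (h * w j)) q) (M q)"]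
    by simp
qed

lemma abs_two_Ham_minus_mod_energy_le:
  "\<bar>2 * Ham d w A q p - mod_energy q p\<bar>
     \<le> (opnorm d A * (1 + c0) * mu + h\<^sup>2 * alpha\<^sup>2 / 4) * (vnorm d (Omv w q))\<^sup>2"
proof -
  define X where "X = vnorm d (Omv w q)"
  define t where "t = h\<^sup>2 / 4 * (vnorm d (force q))\<^sup>2"
  have "vnorm d (force q) \<le> 1 * vnorm d (M q)"
    unfolding force_eq using abs_sinc_le_one by (intro vnorm_diag_le) auto
  also have "1 * vnorm d (M q) \<le> alpha * X"
    unfolding X_def using order_trans[OF vnorm_M_le mult_left_mono[OF vnorm_le_vnorm_Omv alpha_nonneg]]
    by simp
  finally have "(vnorm d (force q))\<^sup>2 \<le> (alpha * X)\<^sup>2"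
    by (intro power_mono) auto
  then have "t \<le> h\<^sup>2 / 4 * (alpha * X)\<^sup>2"
    unfolding t_def by (rule mult_left_mono) simp
  moreover have "0 \<le> t"
    unfolding t_def by simp
  moreover have "\<bar>2 * Ham d w A q p - mod_energy q p\<bar>
      \<le> \<bar>Re (cinner d q (matvec d A q)) - Re (cinner d (diag (\<lambda>j. cos (h * w j)) q) (M q))\<bar> + \<bar>t\<bar>"
    unfolding two_Ham_minus_mod_energy t_def by (rule abs_triangle_ineq)
  ultimately show ?thesis
    using filter_coupling_error_le[of q] unfolding X_def
    by (simp add: distrib_right power_mult_distrib)
qed

lemma Ham_traj_diff_le:
  assumes traj: "traj d w A h psi1 phi q0 qd0 n = (q, qd)"
  defines "K \<equiv> energy_error_const c0 c1 (opnorm d A) (vnorm d (Omv w q0)) (vnorm d qd0)"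
  shows "\<bar>Ham d w A q qd - Ham d w A q0 qd0\<bar> \<le> K * min h (1 / \<omega>) + K * h\<^sup>2"
proof -
  define E where "E = 16 * (vnorm d qd0 + vnorm d (Omv w q0))\<^sup>2"
  define G where "G = opnorm d A * (1 + c0) * mu + h\<^sup>2 * alpha\<^sup>2 / 4"
  have G: "0 \<le> G"
    unfolding G_def using opnorm_nonneg c0_nonneg mu_nonneg by simp
  have "(vnorm d (Omv w q))\<^sup>2 \<le> E" and "(vnorm d (Omv w q0))\<^sup>2 \<le> E"
    using vnorm_Omv_traj_le[of q0 qd0 n] vnorm_Omv_traj_le[of q0 qd0 0] traj unfolding E_def by simp_all
  then have "\<bar>2 * Ham d w A q qd - mod_energy q qd\<bar> \<le> G * E"
    and "\<bar>2 * Ham d w A q0 qd0 - mod_energy q0 qd0\<bar> \<le> G * E"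
    using abs_two_Ham_minus_mod_energy_le G unfolding G_def[symmetric]
    by (meson mult_left_mono order_trans)+
  moreover have "mod_energy q qd = mod_energy q0 qd0"
    using mod_energy_traj[of q0 qd0 n] traj by simp
  ultimately have "\<bar>Ham d w A q qd - Ham d w A q0 qd0\<bar> \<le> G * E"
    by linarith
  also have "G * E \<le> K * min h (1 / \<omega>) + K * h\<^sup>2"
  proof -
    define a1 where "a1 = opnorm d A * (1 + c0) * (1 + c0 + c1) * E"
    define a2 where "a2 = c0 ^ 4 * (opnorm d A)\<^sup>2 / 4 * E"
    have "0 \<le> a1" "0 \<le> a2" "0 \<le> min h (1 / \<omega>)"
      unfolding a1_def a2_def E_def using opnorm_nonneg c0_nonneg c1_nonneg h_pos one_le_omin by simp_all
    moreover have "G * E = a1 * min h (1 / \<omega>) + a2 * h\<^sup>2"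
      unfolding G_def a1_def a2_def mu_def alpha_def by (simp add: algebra_simps power2_eq_square power4_eq_xxxx)
    moreover have "K = a1 + a2"
      unfolding K_def energy_error_const_def a1_def a2_def E_def by (simp add: algebra_simps)
    ultimately show ?thesis
      by (simp add: algebra_simps add_mono mult_left_mono)
  qed
  finally show ?thesis .
qed

end

theorem theorem6:
  shows "\<exists>C :: real \<Rightarrow> real \<Rightarrow> real \<Rightarrow> real \<Rightarrow> real \<Rightarrow> real.
    \<forall>(d::nat) (w::nat \<Rightarrow> real) (A::nat \<Rightarrow> nat \<Rightarrow> complex) (h::real) (psi1::real \<Rightarrow> real)
      (phi::real \<Rightarrow> real) (c0::real) (c1::real) (q0::nat \<Rightarrow> complex) (qd0::nat \<Rightarrow> complex) (n::nat).
    d \<ge> 1 \<longrightarrow> (\<forall>j<d. w j > 0) \<longrightarrow> selfadjoint d A \<longrightarrow> 0 < h \<longrightarrow> h \<le> 1 \<longrightarrow>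
    (\<forall>x. psi1 (- x) = psi1 x) \<longrightarrow> (\<forall>x. phi (- x) = phi x) \<longrightarrow>
    (\<forall>x. psi1 x = sinc x * phi x) \<longrightarrow> c0 \<ge> 0 \<longrightarrow> c1 \<ge> 0 \<longrightarrow>
    (\<forall>x. \<bar>psi1 x\<bar> \<le> c0) \<longrightarrow> (\<forall>x. \<bar>phi x\<bar> \<le> c0) \<longrightarrow> (\<forall>x. \<bar>phi x - 1\<bar> \<le> c1 * \<bar>x\<bar>) \<longrightarrow>
    omin d w \<ge> c0\<^sup>2 * opnorm d A / 2 + 1 \<longrightarrow>
    (let K = C c0 c1 (opnorm d A) (vnorm d (Omv w q0)) (vnorm d qd0);
         (q, qd) = traj d w A h psi1 phi q0 qd0 n
     in \<bar>Ham d w A q qd - Ham d w A q0 qd0\<bar> \<le> K * min h (1 / omin d w) + K * h\<^sup>2)"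
proof (intro exI[of _ energy_error_const] allI impI, goal_cases)
  case (1 d w A h psi1 phi c0 c1 q0 qd0 n)
  then interpret filtered_scheme d w A h psi1 phi c0 c1
    by unfold_locales simp_all
  obtain q qd where "traj d w A h psi1 phi q0 qd0 n = (q, qd)"
    by fastforce
  with Ham_traj_diff_le show ?case
    by simp
qed

end
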